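(* Let $G$ be a bipartite graph without isolated vertices, with at least two vertices, such that $\mathrm{Ind}(G)$ is pure and $G$ has a cross-free pure order. Then for any pure order $\{x_1,\ldots,x_n\}$, $\{y_1,\ldots,y_n\}$ of $G$ there exist indices $i,j$ with $\deg_G x_i=1$ and $\deg_G y_j=1$.
   Context: $\mathrm{Ind}(G)$ is the complex of independent sets of $G$. A pure order of such $G$ is a partition of the vertices into independent sets $\{x_1,\ldots,x_n\}$, $\{y_1,\ldots,y_n\}$ with (1) $x_iy_i$ an edge for all $i$ and (2) $x_iy_j,x_jy_k$ edges with $i,j,k$ distinct implies $x_iy_k$ an edge. A pure order has a cross if there are $i\ne j$ with both $x_iy_j$ and $x_jy_i$ edges; otherwise it is cross-free. The degree of a vertex is the number of its neighbours. *)

theory Defs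
  imports Main
begin

definition simple_graph :: "'a set \<Rightarrow> ('a \<Rightarrow> 'a \<Rightarrow> bool) \<Rightarrow> bool" where
  "simple_graph V E \<longleftrightarrow> finite V \<and> (\<forall>u v. E u v \<longrightarrow> u \<in> V \<and> v \<in> V)
     \<and> (\<forall>u v. E u v \<longrightarrow> E v u) \<and> (\<forall>u. \<not> E u u)"

definition independent :: "'a set \<Rightarrow> ('a \<Rightarrow> 'a \<Rightarrow> bool) \<Rightarrow> 'a set \<Rightarrow> bool" where
  "independent V E S \<longleftrightarrow> S \<subseteq> V \<and> (\<forall>u\<in>S. \<forall>v\<in>S. \<not> E u v)"

text \<open>Facets of Ind(G) are the maximal independent sets.\<close>
definition maximal_independent :: "'a set \<Rightarrow> ('a \<Rightarrow> 'a \<Rightarrow> bool) \<Rightarrow> 'a set \<Rightarrow> bool" where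
  "maximal_independent V E S \<longleftrightarrow> independent V E S
     \<and> (\<forall>T. independent V E T \<and> S \<subseteq> T \<longrightarrow> T = S)"

definition ind_pure :: "'a set \<Rightarrow> ('a \<Rightarrow> 'a \<Rightarrow> bool) \<Rightarrow> bool" where
  "ind_pure V E \<longleftrightarrow> (\<forall>S T. maximal_independent V E S \<and> maximal_independent V E T
     \<longrightarrow> card S = card T)"

definition bipartite :: "'a set \<Rightarrow> ('a \<Rightarrow> 'a \<Rightarrow> bool) \<Rightarrow> bool" where
  "bipartite V E \<longleftrightarrow> (\<exists>A B. A \<union> B = V \<and> A \<inter> B = {} \<and> independent V E A \<and> independent V E B)"

definition degree :: "'a set \<Rightarrow> ('a \<Rightarrow> 'a \<Rightarrow> bool) \<Rightarrow> 'a \<Rightarrow> nat" where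
  "degree V E v = card {u \<in> V. E v u}"

definition no_isolated :: "'a set \<Rightarrow> ('a \<Rightarrow> 'a \<Rightarrow> bool) \<Rightarrow> bool" where
  "no_isolated V E \<longleftrightarrow> (\<forall>v\<in>V. \<exists>u. E v u)"

text \<open>A pure order, indexed by 0..<n: x_0..x_{n-1}, y_0..y_{n-1}.\<close>
definition pure_order :: "'a set \<Rightarrow> ('a \<Rightarrow> 'a \<Rightarrow> bool) \<Rightarrow> nat \<Rightarrow> (nat \<Rightarrow> 'a) \<Rightarrow> (nat \<Rightarrow> 'a) \<Rightarrow> bool" where
  "pure_order V E n x y \<longleftrightarrow>
     inj_on x {..<n} \<and> inj_on y {..<n} \<and>
     x ` {..<n} \<inter> y ` {..<n} = {} \<and> x ` {..<n} \<union> y ` {..<n} = V \<and>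
     independent V E (x ` {..<n}) \<and> independent V E (y ` {..<n}) \<and>
     (\<forall>i<n. E (x i) (y i)) \<and>
     (\<forall>i<n. \<forall>j<n. \<forall>k<n. i \<noteq> j \<and> j \<noteq> k \<and> i \<noteq> k \<and> E (x i) (y j) \<and> E (x j) (y k)
        \<longrightarrow> E (x i) (y k))"

definition cross_free :: "('a \<Rightarrow> 'a \<Rightarrow> bool) \<Rightarrow> nat \<Rightarrow> (nat \<Rightarrow> 'a) \<Rightarrow> (nat \<Rightarrow> 'a) \<Rightarrow> bool" where
  "cross_free E n x y \<longleftrightarrow> \<not> (\<exists>i<n. \<exists>j<n. i \<noteq> j \<and> E (x i) (y j) \<and> E (x j) (y i))"

end

theory Submission
  imports Defs
begin

(* Fix a cross-free pure order x', y' of G (indices < m) and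
   let i \<prec> j mean that i \<noteq> j and x'_i y'_j is an edge.  The pure-order axiom makes
   \<prec> transitive and cross-freeness makes it asymmetric, so \<prec> is a strict partial
   order on the finite index set.  If k has no \<prec>-predecessor then x'_k is the only
   neighbour of y'_k, and if k has no \<prec>-successor then y'_k is the only neighbour
   of x'_k; so minimal and maximal indices yield vertices of degree 1.
   The other pure order x, y splits V into the independent sets X = {x_i} and
   Y = {y_i}.  Along every edge the side changes, hence i \<prec> j forces x'_i and
   x'_j onto the same side.  Taking the indices k with x'_k on a fixed side and
   choosing a \<prec>-minimal and a \<prec>-maximal one among them therefore produces a
   leaf in Y and a leaf in X (or the other way round), which is the theorem. *)

lemma simple_graph_edge:
  assumes "simple_graph V E" "E u v"
  shows "E v u" "u \<in> V" "v \<in> V"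
  using assms unfolding simple_graph_def by blast+

definition bipartition :: "'a set \<Rightarrow> ('a \<Rightarrow> 'a \<Rightarrow> bool) \<Rightarrow> 'a set \<Rightarrow> 'a set \<Rightarrow> bool" where
  "bipartition V E A B \<longleftrightarrow>
     A \<union> B = V \<and> A \<inter> B = {} \<and> independent V E A \<and> independent V E B"

lemma bipartition_swap: "bipartition V E A B \<Longrightarrow> bipartition V E B A"
  unfolding bipartition_def by blast

lemma pure_order_bipartition:
  "pure_order V E n x y \<Longrightarrow> bipartition V E (x ` {..<n}) (y ` {..<n})"
  unfolding pure_order_def bipartition_def by (elim conjE) (intro conjI)

lemma bipartition_edge:
  assumes "simple_graph V E" "bipartition V E A B" "E u v"
  shows "u \<in> A \<longleftrightarrow> v \<in> B"
proof -
  have "u \<in> V" "v \<in> V"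
    using simple_graph_edge[OF assms(1,3)] by blast+
  moreover have "\<not> (u \<in> A \<and> v \<in> A)" "\<not> (u \<in> B \<and> v \<in> B)"
    using assms(2,3) unfolding bipartition_def independent_def by blast+
  ultimately show ?thesis
    using assms(2) unfolding bipartition_def by blast
qed

definition precedes :: "('a \<Rightarrow> 'a \<Rightarrow> bool) \<Rightarrow> nat \<Rightarrow> (nat \<Rightarrow> 'a) \<Rightarrow> (nat \<Rightarrow> 'a)
    \<Rightarrow> nat \<Rightarrow> nat \<Rightarrow> bool" where
  "precedes E m x y i j \<longleftrightarrow> i < m \<and> j < m \<and> i \<noteq> j \<and> E (x i) (y j)"

lemma precedes_asym: "cross_free E m x y \<Longrightarrow> asymp (precedes E m x y)"
  unfolding cross_free_def precedes_def by (rule asympI) blast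

text \<open>For a cross-free pure order \<prec> is transitive: asymmetry rules out i = k,
  and the pure-order axiom gives the edge x_i y_k.\<close>
lemma precedes_trans:
  assumes "pure_order V E m x y" "cross_free E m x y"
  shows "transp (precedes E m x y)"
proof (rule transpI)
  fix i j k
  assume ij: "precedes E m x y i j" and jk: "precedes E m x y j k"
  then have "i \<noteq> k"
    using asympD[OF precedes_asym[OF assms(2)]] by blast
  moreover have "\<forall>i<m. \<forall>j<m. \<forall>k<m. i \<noteq> j \<and> j \<noteq> k \<and> i \<noteq> k
      \<and> E (x i) (y j) \<and> E (x j) (y k) \<longrightarrow> E (x i) (y k)"
    using assms(1) unfolding pure_order_def by (elim conjE)
  ultimately show "precedes E m x y i k"
    using ij jk unfolding precedes_def by blast
qed

text \<open>Relative to any bipartition, \<prec> never changes the side of x_i: the edges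
  x_i y_j and x_j y_j both cross between the sides.\<close>
lemma precedes_same_side:
  assumes "simple_graph V E" "pure_order V E m x y" "bipartition V E A B"
    and "precedes E m x y i j"
  shows "x i \<in> A \<longleftrightarrow> x j \<in> A"
proof -
  have "E (x i) (y j)" "E (x j) (y j)"
    using assms(2,4) unfolding precedes_def pure_order_def by blast+
  then show ?thesis
    using bipartition_edge[OF assms(1,3)] by blast
qed

lemma pure_order_neighbour_of_x:
  assumes "simple_graph V E" "pure_order V E m x y" "k < m" "E (x k) u"
  shows "\<exists>j<m. u = y j"
proof -
  have "x k \<in> x ` {..<m}" using assms(3) by blast
  then have "u \<in> y ` {..<m}"
    using bipartition_edge[OF assms(1) pure_order_bipartition[OF assms(2)] assms(4)] by blast
  then show ?thesis by blast
qed

lemma pure_order_neighbour_of_y: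
  assumes "simple_graph V E" "pure_order V E m x y" "k < m" "E (y k) u"
  shows "\<exists>j<m. u = x j"
proof -
  have "y k \<in> y ` {..<m}" using assms(3) by blast
  then have "u \<in> x ` {..<m}"
    using bipartition_edge[OF assms(1) bipartition_swap[OF pure_order_bipartition[OF assms(2)]]
        assms(4)] by blast
  then show ?thesis by blast
qed

lemma pure_order_source_leaf:
  assumes graph: "simple_graph V E" and po: "pure_order V E m x y" and "k < m"
    and source: "\<And>j. \<not> precedes E m x y j k"
  shows "degree V E (y k) = 1"
proof -
  have diag: "E (x k) (y k)" using po \<open>k < m\<close> unfolding pure_order_def by blast
  have "{u \<in> V. E (y k) u} = {x k}"
  proof (intro equalityI subsetI)
    fix u assume u: "u \<in> {u \<in> V. E (y k) u}"
    then obtain j where j: "j < m" "u = x j"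
      using pure_order_neighbour_of_y[OF graph po \<open>k < m\<close>] by blast
    then have "E (x j) (y k)" using u simple_graph_edge[OF graph] by blast
    then show "u \<in> {x k}"
      using j \<open>k < m\<close> source unfolding precedes_def by auto
  qed (use diag simple_graph_edge[OF graph] in blast)
  then show ?thesis unfolding degree_def by simp
qed

lemma pure_order_sink_leaf:
  assumes graph: "simple_graph V E" and po: "pure_order V E m x y" and "k < m"
    and sink: "\<And>j. \<not> precedes E m x y k j"
  shows "degree V E (x k) = 1"
proof -
  have diag: "E (x k) (y k)" using po \<open>k < m\<close> unfolding pure_order_def by blast
  have "{u \<in> V. E (x k) u} = {y k}"
  proof (intro equalityI subsetI)
    fix u assume u: "u \<in> {u \<in> V. E (x k) u}"
    then obtain j where j: "j < m" "u = y j"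
      using pure_order_neighbour_of_x[OF graph po \<open>k < m\<close>] by blast
    then show "u \<in> {y k}"
      using u \<open>k < m\<close> sink unfolding precedes_def by auto
  qed (use diag simple_graph_edge[OF graph] in blast)
  then show ?thesis unfolding degree_def by simp
qed

text \<open>A \<prec>-minimal and a \<prec>-maximal index among those k with x_k \<in> A
  give a leaf y_k in B and a leaf x_k in A; extremality within this set is global
  because \<prec> preserves sides.\<close>
lemma cross_free_leaves_on_both_sides:
  assumes graph: "simple_graph V E" and po: "pure_order V E m x y"
    and cf: "cross_free E m x y" and bip: "bipartition V E A B"
    and k0: "k0 < m" "x k0 \<in> A"
  shows "\<exists>a\<in>A. \<exists>b\<in>B. degree V E a = 1 \<and> degree V E b = 1"
proof -
  define S where "S = {k. k < m \<and> x k \<in> A}"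
  have S: "finite S" "S \<noteq> {}"
    using k0 unfolding S_def by auto
  have ord: "asymp_on S (precedes E m x y)" "transp_on S (precedes E m x y)"
    using precedes_asym[OF cf] precedes_trans[OF po cf]
    by (auto intro: asymp_on_subset transp_on_subset)
  have closed: "j \<in> S \<longleftrightarrow> k \<in> S" if "precedes E m x y j k" for j k
    using that precedes_same_side[OF graph po bip that] unfolding S_def precedes_def by blast
  obtain k where k: "k \<in> S" "\<forall>j\<in>S. j \<noteq> k \<longrightarrow> \<not> precedes E m x y j k"
    using Finite_Set.bex_min_element[OF S(1) ord S(2)] by blast
  obtain k' where k': "k' \<in> S" "\<forall>j\<in>S. j \<noteq> k' \<longrightarrow> \<not> precedes E m x y k' j"
    using Finite_Set.bex_max_element[OF S(1) ord S(2)] by blast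
  have "degree V E (y k) = 1"
    using k closed by (intro pure_order_source_leaf[OF graph po]) (auto simp: S_def precedes_def)
  moreover have "y k \<in> B"
    using k po bipartition_edge[OF graph bip] unfolding S_def pure_order_def by blast
  moreover have "degree V E (x k') = 1"
    using k' closed by (intro pure_order_sink_leaf[OF graph po]) (auto simp: S_def precedes_def)
  moreover have "x k' \<in> A"
    using k' unfolding S_def by blast
  ultimately show ?thesis by blast
qed

theorem lemma4p7:
  fixes V :: "'a set" and E :: "'a \<Rightarrow> 'a \<Rightarrow> bool"
    and n :: nat and x y :: "nat \<Rightarrow> 'a"
  assumes "simple_graph V E"
    and "bipartite V E"
    and "no_isolated V E"
    and "card V \<ge> 2"
    and "ind_pure V E"
    and "\<exists>m x' y'. pure_order V E m x' y' \<and> cross_free E m x' y'"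
    and "pure_order V E n x y"
  shows "\<exists>i<n. \<exists>j<n. degree V E (x i) = 1 \<and> degree V E (y j) = 1"
proof -
  obtain m x' y' where po: "pure_order V E m x' y'" and cf: "cross_free E m x' y'"
    using assms(6) by blast
  define X where "X = x ` {..<n}"
  define Y where "Y = y ` {..<n}"
  have bip: "bipartition V E X Y"
    unfolding X_def Y_def using pure_order_bipartition[OF assms(7)] .
  have "V \<noteq> {}" using assms(4) by auto
  then have "0 < m" using po unfolding pure_order_def by auto
  then have "x' 0 \<in> V"
    using po simple_graph_edge(2)[OF assms(1)] unfolding pure_order_def by blast
  then have "x' 0 \<in> X \<or> x' 0 \<in> Y"
    using bip unfolding bipartition_def by blast
  with \<open>0 < m\<close> have "\<exists>a\<in>X. \<exists>b\<in>Y. degree V E a = 1 \<and> degree V E b = 1"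
    using cross_free_leaves_on_both_sides[OF assms(1) po cf bip]
      cross_free_leaves_on_both_sides[OF assms(1) po cf bipartition_swap[OF bip]]
    by blast
  then show ?thesis unfolding X_def Y_def by blast
qed

end
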